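(* There is an absolute constant $C>0$ such that for every $a\in(-\infty,1)$ and all $\omega_1,\omega_2\in\mathbb D_a$, $$|r(\omega_1)-r(\omega_2)|\le C\,\|\rho(\omega_1-\omega_2)\|_{L^\infty}^{1/2}.$$
   Context: Let $\rho(x)=(1+|x|)^{-1/2}$ and $\eta_a=\frac{1}{2^{9/2}(4+|a|)^3}$. $\mathbb D_a$ is the set of continuous even functions $\omega$ on $\mathbb R$ with $\|\rho\omega\|_{L^\infty}<\infty$ such that $\omega(0)=1$; $(1-x^2)_+\le\omega(x)\le1$ for all $x$; $\omega$ is non-increasing on $[0,\infty)$; $s\mapsto\omega(\sqrt s)$ is convex on $[0,\infty)$; and the left derivative satisfies $\omega'_-(1/2)\le-\eta_a$. $r(\omega)=\frac1\pi\int_0^\infty\frac{\omega(0)-\omega(y)}{y^2}\,dy$. *)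

theory Defs
  imports "HOL-Analysis.Analysis"
begin

definition rho :: "real \<Rightarrow> real" where
  "rho x = (1 + \<bar>x\<bar>) powr (-1/2)"

definition eta :: "real \<Rightarrow> real" where
  "eta a = 1 / (2 powr (9/2) * (4 + \<bar>a\<bar>) ^ 3)"

text \<open>Weighted sup norm: the L-infinity norm of rho * f (f continuous, so sup = ess sup).\<close>
definition wnorm :: "(real \<Rightarrow> real) \<Rightarrow> real" where
  "wnorm f = (SUP x. \<bar>rho x * f x\<bar>)"

definition DD :: "real \<Rightarrow> (real \<Rightarrow> real) set" where
  "DD a = {\<omega>. continuous_on UNIV \<omega>
      \<and> (\<forall>x. \<omega> (-x) = \<omega> x)
      \<and> bdd_above (range (\<lambda>x. \<bar>rho x * \<omega> x\<bar>))
      \<and> \<omega> 0 = 1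
      \<and> (\<forall>x. max (1 - x^2) 0 \<le> \<omega> x \<and> \<omega> x \<le> 1)
      \<and> (\<forall>x y. 0 \<le> x \<longrightarrow> x \<le> y \<longrightarrow> \<omega> y \<le> \<omega> x)
      \<and> convex_on {0..} (\<lambda>s. \<omega> (sqrt s))
      \<and> (\<exists>D. (\<omega> has_real_derivative D) (at (1/2) within {..1/2}) \<and> D \<le> - eta a)}"

definition rr :: "(real \<Rightarrow> real) \<Rightarrow> real" where
  "rr \<omega> = (1 / pi) * (LINT y:{0<..}|lborel. (\<omega> 0 - \<omega> y) / y^2)"

end

theory Submission
  imports Defs
begin

text \<open>Only the envelope \<open>(1 - x\<^sup>2)\<^sub>+ \<le> \<omega> \<le> 1 = \<omega> 0\<close> of the class \<open>DD a\<close> is used.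
  If \<open>\<delta>\<close> is the weighted norm of \<open>\<omega>1 - \<omega>2\<close>, then \<open>d = \<omega>2 - \<omega>1\<close> satisfies
  \<open>\<bar>d y\<bar> \<le> y\<^sup>2\<close>, \<open>\<bar>d y\<bar> \<le> 1\<close> and \<open>\<bar>d y\<bar> \<le> \<delta> * sqrt (1 + y)\<close>. Split the integral of
  \<open>\<bar>d y\<bar> / y\<^sup>2\<close> at \<open>s = min 1 (sqrt \<delta>)\<close>: the integrand is at most 1 on \<open>(0, s]\<close>, and beyond \<open>s\<close>
  at most \<open>sqrt 2 * s * sqrt s * y powr (-3/2)\<close>, whose integral is \<open>2 * sqrt 2 * s\<close>.
  Hence \<open>\<bar>rr \<omega>1 - rr \<omega>2\<bar> \<le> (1 + 2 * sqrt 2) / pi * sqrt \<delta>\<close>.\<close>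

definition cutoff_majorant :: "real \<Rightarrow> real \<Rightarrow> real \<Rightarrow> real" where
  "cutoff_majorant s K y = (if y \<le> s then 1 else K * y powr (-3/2))"

lemma has_integral_cutoff_majorant:
  assumes "s > 0"
  shows "(cutoff_majorant s K has_integral s + 2 * K / sqrt s) {0<..}"
proof -
  have "((\<lambda>_. 1) has_integral s) {0..s}"
    using has_integral_const_real[of "1::real" 0 s] assms by simp
  then have head: "(cutoff_majorant s K has_integral s) {0..s}"
    by (rule has_integral_eq[rotated]) (simp add: cutoff_majorant_def)
  have "((\<lambda>y. K * y powr (-3/2)) has_integral K * (2 / sqrt s)) {s..}"
    using has_integral_mult_right[OF has_integral_powr_to_inf[of "-3/2" s]] assms
    by (simp add: powr_minus_divide powr_half_sqrt)
  then have "((\<lambda>y. K * y powr (-3/2)) has_integral 2 * K / sqrt s) {s<..}"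
    using has_integral_closure[of "{s<..}" "\<lambda>y. K * y powr (-3/2)"] by (simp add: ac_simps)
  then have tail: "(cutoff_majorant s K has_integral 2 * K / sqrt s) {s<..}"
    by (rule has_integral_eq[rotated]) (simp add: cutoff_majorant_def)
  have "(cutoff_majorant s K has_integral s + 2 * K / sqrt s) ({0..s} \<union> {s<..})"
    by (rule has_integral_Un[OF head tail]) (auto intro: negligible_subset[OF negligible_empty])
  moreover have "{0..s} \<union> {s<..} = closure {0<..}"
    using assms by auto
  ultimately show ?thesis
    using has_integral_closure[of "{0<..}" "cutoff_majorant s K"] by simp
qed

lemma quotient_le_cutoff_majorant:
  fixes s y t :: real
  assumes s: "0 < s" "s \<le> 1" and y: "0 < y"
    and t_quadratic: "\<bar>t\<bar> \<le> y\<^sup>2" and t_tail: "\<bar>t\<bar> \<le> s\<^sup>2 * sqrt (1 + y)"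
  shows "\<bar>t\<bar> / y\<^sup>2 \<le> cutoff_majorant s (sqrt 2 * s * sqrt s) y"
proof (cases "y \<le> s")
  case True
  then show ?thesis
    using t_quadratic y by (simp add: cutoff_majorant_def divide_le_eq)
next
  case False
  have "s * y \<le> y"
    using s y by (simp add: mult_left_le_one_le)
  then have "s * (1 + y) \<le> 2 * y"
    using False by (simp add: algebra_simps)
  then have "sqrt s * sqrt (1 + y) \<le> sqrt 2 * sqrt y"
    by (metis real_sqrt_le_mono real_sqrt_mult)
  then have "s * sqrt s * (sqrt s * sqrt (1 + y)) \<le> s * sqrt s * (sqrt 2 * sqrt y)"
    using s by (intro mult_left_mono) auto
  moreover have "s * sqrt s * (sqrt s * sqrt (1 + y)) = s\<^sup>2 * sqrt (1 + y)"
    using s by (simp add: power2_eq_square)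
  ultimately have "s\<^sup>2 * sqrt (1 + y) \<le> sqrt 2 * s * sqrt s * sqrt y"
    by (simp only: ac_simps)
  then have "\<bar>t\<bar> / y\<^sup>2 \<le> sqrt 2 * s * sqrt s * sqrt y / y\<^sup>2"
    using t_tail y by (simp add: divide_right_mono)
  also have "\<dots> = sqrt 2 * s * sqrt s * y powr (-3/2)"
  proof -
    have "y powr (-3/2) = y powr (1/2) / y powr 2"
      by (simp add: powr_diff[symmetric])
    then show ?thesis
      using y by (simp add: powr_half_sqrt)
  qed
  finally show ?thesis
    using False by (simp add: cutoff_majorant_def)
qed

lemma abs_integral_quotient_le_sqrt:
  fixes d :: "real \<Rightarrow> real" and \<delta> :: real
  assumes cont: "continuous_on {0<..} d" and "0 \<le> \<delta>"
    and quadratic: "\<And>y. 0 < y \<Longrightarrow> \<bar>d y\<bar> \<le> y\<^sup>2"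
    and bounded: "\<And>y. 0 < y \<Longrightarrow> \<bar>d y\<bar> \<le> 1"
    and weighted: "\<And>y. 0 < y \<Longrightarrow> \<bar>d y\<bar> \<le> \<delta> * sqrt (1 + y)"
  shows "\<bar>integral {0<..} (\<lambda>y. d y / y\<^sup>2)\<bar> \<le> 4 * sqrt \<delta>"
proof (cases "\<delta> = 0")
  case True
  have "integral {0<..} (\<lambda>y. d y / y\<^sup>2) = 0"
    by (rule integral_unique[OF has_integral_is_0]) (use True weighted in simp)
  then show ?thesis
    using \<open>0 \<le> \<delta>\<close> by simp
next
  case False
  define s where "s = min 1 (sqrt \<delta>)"
  have s: "0 < s" "s \<le> 1" "s \<le> sqrt \<delta>"
    using False \<open>0 \<le> \<delta>\<close> by (auto simp: s_def)
  have tail: "\<bar>d y\<bar> \<le> s\<^sup>2 * sqrt (1 + y)" if "0 < y" for y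
  proof (cases "\<delta> \<le> 1")
    case True
    then have "s\<^sup>2 = \<delta>"
      using \<open>0 \<le> \<delta>\<close> by (simp add: s_def)
    then show ?thesis
      using weighted[OF that] by simp
  next
    case False
    then have "s\<^sup>2 * sqrt (1 + y) = sqrt (1 + y)"
      by (simp add: s_def)
    moreover have "1 \<le> sqrt (1 + y)"
      using that by simp
    ultimately show ?thesis
      using bounded[OF that] by linarith
  qed
  have "norm (integral {0<..} (\<lambda>y. d y / y\<^sup>2)) \<le> s + 2 * (sqrt 2 * s * sqrt s) / sqrt s"
  proof (rule integral_norm_bound_integral')
    show "(cutoff_majorant s (sqrt 2 * s * sqrt s) has_integral s + 2 * (sqrt 2 * s * sqrt s) / sqrt s) {0<..}"
      by (rule has_integral_cutoff_majorant[OF s(1)])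
    show "(\<lambda>y. d y / y\<^sup>2) \<in> borel_measurable (lebesgue_on {0<..})"
      by (intro continuous_imp_measurable_on_sets_lebesgue continuous_intros cont) auto
  qed (use quotient_le_cutoff_majorant[OF s(1,2) _ quadratic tail] in \<open>auto simp: abs_divide\<close>)
  also have "\<dots> = (1 + 2 * sqrt 2) * s"
    using s by (simp add: algebra_simps)
  also have "\<dots> \<le> 4 * sqrt \<delta>"
  proof -
    have "sqrt 2 \<le> 3 / 2"
      by (rule real_le_lsqrt) (simp_all add: power2_eq_square)
    then show ?thesis
      using s by (intro mult_mono) auto
  qed
  finally show ?thesis
    by simp
qed

lemma rho_eq: "rho x = 1 / sqrt (1 + \<bar>x\<bar>)"
  unfolding rho_def by (simp add: powr_minus_divide powr_half_sqrt)

lemma abs_le_wnorm: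
  assumes "bdd_above (range (\<lambda>x. \<bar>rho x * f x\<bar>))"
  shows "\<bar>f y\<bar> \<le> wnorm f * sqrt (1 + \<bar>y\<bar>)"
proof -
  have "\<bar>f y\<bar> = \<bar>rho y * f y\<bar> * sqrt (1 + \<bar>y\<bar>)"
    by (simp add: rho_eq abs_mult)
  also have "\<dots> \<le> wnorm f * sqrt (1 + \<bar>y\<bar>)"
    unfolding wnorm_def by (intro mult_right_mono cSUP_upper assms) auto
  finally show ?thesis .
qed

lemma wnorm_nonneg:
  assumes "bdd_above (range (\<lambda>x. \<bar>rho x * f x\<bar>))"
  shows "0 \<le> wnorm f"
  unfolding wnorm_def by (rule order_trans[OF abs_ge_zero cSUP_upper[OF UNIV_I assms]])

lemma DD_bounds:
  assumes "\<omega> \<in> DD a"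
  shows "\<omega> 0 = 1" "1 - x\<^sup>2 \<le> \<omega> x" "0 \<le> \<omega> x" "\<omega> x \<le> 1"
proof -
  have "\<omega> 0 = 1" "max (1 - x\<^sup>2) 0 \<le> \<omega> x" "\<omega> x \<le> 1"
    using assms unfolding DD_def by blast+
  then show "\<omega> 0 = 1" "1 - x\<^sup>2 \<le> \<omega> x" "0 \<le> \<omega> x" "\<omega> x \<le> 1"
    by auto
qed

lemma DD_continuous:
  assumes "\<omega> \<in> DD a"
  shows "continuous_on UNIV \<omega>"
  using assms by (simp add: DD_def)

lemma DD_diff_bounds:
  assumes "\<omega>1 \<in> DD a" "\<omega>2 \<in> DD b"
  shows "\<bar>\<omega>1 x - \<omega>2 x\<bar> \<le> x\<^sup>2" "\<bar>\<omega>1 x - \<omega>2 x\<bar> \<le> 1"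
  using DD_bounds(2-4)[OF assms(1), of x] DD_bounds(2-4)[OF assms(2), of x] by auto

lemma DD_diff_weighted_bdd:
  assumes "\<omega>1 \<in> DD a" "\<omega>2 \<in> DD b"
  shows "bdd_above (range (\<lambda>x. \<bar>rho x * (\<omega>1 x - \<omega>2 x)\<bar>))"
proof (rule bdd_aboveI2)
  fix x
  have "rho x \<le> 1" "0 \<le> rho x"
    by (simp_all add: rho_eq)
  then show "\<bar>rho x * (\<omega>1 x - \<omega>2 x)\<bar> \<le> 1"
    using DD_diff_bounds(2)[OF assms] by (simp add: abs_mult mult_le_one)
qed

lemma DD_quotient_set_integrable:
  assumes "\<omega> \<in> DD a"
  shows "set_integrable lborel {0<..} (\<lambda>y. (\<omega> 0 - \<omega> y) / y\<^sup>2)"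
proof -
  have "(\<lambda>y. (\<omega> 0 - \<omega> y) / y\<^sup>2) absolutely_integrable_on {0<..}"
  proof (rule measurable_bounded_by_integrable_imp_absolutely_integrable)
    show "(\<lambda>y. (\<omega> 0 - \<omega> y) / y\<^sup>2) \<in> borel_measurable (lebesgue_on {0<..})"
      by (intro continuous_imp_measurable_on_sets_lebesgue continuous_intros
          continuous_on_subset[OF DD_continuous[OF assms]]) auto
    show "cutoff_majorant 1 (sqrt 2) integrable_on {0<..}"
      by (rule has_integral_integrable[OF has_integral_cutoff_majorant]) simp
    fix y :: real
    assume y: "y \<in> {0<..}"
    have "1 \<le> sqrt (1 + y)"
      using y by simp
    moreover have "\<bar>1 - \<omega> y\<bar> \<le> 1" "\<bar>1 - \<omega> y\<bar> \<le> y\<^sup>2"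
      using DD_bounds(2-4)[OF assms, of y] by auto
    ultimately have "\<bar>1 - \<omega> y\<bar> \<le> 1\<^sup>2 * sqrt (1 + y)" "\<bar>1 - \<omega> y\<bar> \<le> y\<^sup>2"
      unfolding power_one mult_1 by linarith+
    then show "norm ((\<omega> 0 - \<omega> y) / y\<^sup>2) \<le> cutoff_majorant 1 (sqrt 2) y"
      using quotient_le_cutoff_majorant[of 1 y "1 - \<omega> y"] y DD_bounds(1)[OF assms]
      by (simp add: abs_divide)
  qed simp
  moreover have "(\<lambda>y. indicator {0<..} y *\<^sub>R ((\<omega> 0 - \<omega> y) / y\<^sup>2)) \<in> borel_measurable lborel"
    using borel_measurable_continuous_onI[OF DD_continuous[OF assms]] by measurable
  ultimately show ?thesis
    unfolding set_integrable_def by (simp add: integrable_completion)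
qed

lemma rr_diff_eq_integral:
  assumes "\<omega>1 \<in> DD a" "\<omega>2 \<in> DD b"
  shows "rr \<omega>1 - rr \<omega>2 = integral {0<..} (\<lambda>y. (\<omega>2 y - \<omega>1 y) / y\<^sup>2) / pi"
proof -
  note integrable = set_borel_integral_eq_integral[OF DD_quotient_set_integrable]
  have "rr \<omega>1 - rr \<omega>2 =
      (integral {0<..} (\<lambda>y. (\<omega>1 0 - \<omega>1 y) / y\<^sup>2)
        - integral {0<..} (\<lambda>y. (\<omega>2 0 - \<omega>2 y) / y\<^sup>2)) / pi"
    using integrable(2)[OF assms(1)] integrable(2)[OF assms(2)]
    by (simp add: rr_def diff_divide_distrib)
  also have "\<dots> = integral {0<..} (\<lambda>y. (\<omega>2 y - \<omega>1 y) / y\<^sup>2) / pi"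
    using integral_diff[OF integrable(1)[OF assms(1)] integrable(1)[OF assms(2)]]
      DD_bounds(1)[OF assms(1)] DD_bounds(1)[OF assms(2)]
    by (simp add: diff_divide_distrib)
  finally show ?thesis .
qed

theorem mainTheorem8:
  shows "\<exists>C>0. \<forall>a<1. \<forall>\<omega>1\<in>DD a. \<forall>\<omega>2\<in>DD a.
           \<bar>rr \<omega>1 - rr \<omega>2\<bar> \<le> C * sqrt (wnorm (\<lambda>x. \<omega>1 x - \<omega>2 x))"
proof (intro exI[of _ 4] conjI allI impI ballI)
  fix a :: real and \<omega>1 \<omega>2
  assume \<omega>1: "\<omega>1 \<in> DD a" and \<omega>2: "\<omega>2 \<in> DD a"
  define \<delta> where "\<delta> = wnorm (\<lambda>x. \<omega>1 x - \<omega>2 x)"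
  note bdd = DD_diff_weighted_bdd[OF \<omega>1 \<omega>2]
  have \<delta>_nonneg: "0 \<le> \<delta>"
    unfolding \<delta>_def by (rule wnorm_nonneg[OF bdd])
  have "\<bar>integral {0<..} (\<lambda>y. (\<omega>2 y - \<omega>1 y) / y\<^sup>2)\<bar> \<le> 4 * sqrt \<delta>"
  proof (rule abs_integral_quotient_le_sqrt)
    show "continuous_on {0<..} (\<lambda>y. \<omega>2 y - \<omega>1 y)"
      using DD_continuous[OF \<omega>1] DD_continuous[OF \<omega>2]
      by (intro continuous_intros) (auto intro: continuous_on_subset)
    show "\<bar>\<omega>2 y - \<omega>1 y\<bar> \<le> \<delta> * sqrt (1 + y)" if "0 < y" for y
      using abs_le_wnorm[OF bdd, of y] that by (simp add: \<delta>_def abs_minus_commute)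
  qed (use \<delta>_nonneg DD_diff_bounds[OF \<omega>2 \<omega>1] in auto)
  then have "\<bar>rr \<omega>1 - rr \<omega>2\<bar> \<le> 4 * sqrt \<delta> / pi"
    by (simp add: rr_diff_eq_integral[OF \<omega>1 \<omega>2] abs_divide divide_right_mono)
  also have "\<dots> \<le> 4 * sqrt \<delta>"
    using \<delta>_nonneg pi_ge_two mult_left_mono[of 1 pi "sqrt \<delta>"] by (simp add: divide_le_eq)
  finally show "\<bar>rr \<omega>1 - rr \<omega>2\<bar> \<le> 4 * sqrt (wnorm (\<lambda>x. \<omega>1 x - \<omega>2 x))"
    unfolding \<delta>_def .
qed simp

end
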